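(* A function $\phi:\mathbb{Z}\to\mathbb{H}$ is an extreme point of the convex set $\mathcal{P}^{\mathbb{H}}_*(\mathbb{Z})$ if and only if $\phi$ is a group homomorphism from $(\mathbb{Z},+)$ to $\mathbb{S}$, i.e. $\phi(n)=s^n$ for some $s\in\mathbb{S}$.
   Context: $\mathbb{H}$ is the real quaternion algebra and $\mathbb{S}=\{q\in\mathbb{H}:|q|=1\}$ is the multiplicative group of unit quaternions. For an abelian group $G$ (with the involution $g^*=-g$), a function $\phi:G\to\mathbb{H}$ is positive definite if for all $k$, $g_1,\dots,g_k\in G$ and $q_1,\dots,q_k\in\mathbb{H}$, $\sum_{i,j=1}^k\overline{q_i}\,\phi(g_j-g_i)\,q_j$ is a nonnegative real number. $\mathcal{P}^{\mathbb{H}}_*(G)$ denotes the convex set of positive definite $\phi:G\to\mathbb{H}$ with $\phi(0)=1$. *)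

theory Defs
  imports "HOL-Analysis.Analysis"
begin

datatype quat = Quat (qre: real) (qi: real) (qj: real) (qk: real)

lemma quat_eqI: "qre x = qre y \<Longrightarrow> qi x = qi y \<Longrightarrow> qj x = qj y \<Longrightarrow> qk x = qk y \<Longrightarrow> x = y"
  by (cases x; cases y) simp

instantiation quat :: ab_group_add
begin
definition "0 = Quat 0 0 0 0"
definition "x + y = Quat (qre x + qre y) (qi x + qi y) (qj x + qj y) (qk x + qk y)"
definition "- x = Quat (- qre x) (- qi x) (- qj x) (- qk x)"
definition "x - y = Quat (qre x - qre y) (qi x - qi y) (qj x - qj y) (qk x - qk y)"
instance
  by standard (auto intro!: quat_eqI simp: zero_quat_def plus_quat_def uminus_quat_def minus_quat_def)
end

instantiation quat :: real_vector
begin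
definition "scaleR r x = Quat (r * qre x) (r * qi x) (r * qj x) (r * qk x)"
instance
  by standard (auto intro!: quat_eqI simp: scaleR_quat_def plus_quat_def algebra_simps)
end

text \<open>Hamilton product: i^2 = j^2 = k^2 = ijk = -1.\<close>
instantiation quat :: ring_1
begin
definition "1 = Quat 1 0 0 0"
definition "x * y = Quat
   (qre x * qre y - qi x * qi y - qj x * qj y - qk x * qk y)
   (qre x * qi y + qi x * qre y + qj x * qk y - qk x * qj y)
   (qre x * qj y - qi x * qk y + qj x * qre y + qk x * qi y)
   (qre x * qk y + qi x * qj y - qj x * qi y + qk x * qre y)"
instance
  by standard (auto intro!: quat_eqI simp: one_quat_def times_quat_def plus_quat_def
      zero_quat_def algebra_simps)
end

definition qcnj :: "quat \<Rightarrow> quat" where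
  "qcnj x = Quat (qre x) (- qi x) (- qj x) (- qk x)"

definition qnorm :: "quat \<Rightarrow> real" where
  "qnorm x = sqrt ((qre x)\<^sup>2 + (qi x)\<^sup>2 + (qj x)\<^sup>2 + (qk x)\<^sup>2)"

definition quat_of_real :: "real \<Rightarrow> quat" where
  "quat_of_real r = Quat r 0 0 0"

definition unit_quats :: "quat set" where
  "unit_quats = {q. qnorm q = 1}"

definition pos_def_Z :: "(int \<Rightarrow> quat) \<Rightarrow> bool" where
  "pos_def_Z \<phi> \<longleftrightarrow>
     (\<forall>(k::nat) (g::nat \<Rightarrow> int) (q::nat \<Rightarrow> quat).
        \<exists>r::real. r \<ge> 0 \<and>
          (\<Sum>i\<in>{1..k}. \<Sum>j\<in>{1..k}. qcnj (q i) * \<phi> (g j - g i) * q j) = quat_of_real r)"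

definition PH_Z :: "(int \<Rightarrow> quat) set" where
  "PH_Z = {\<phi>. pos_def_Z \<phi> \<and> \<phi> 0 = 1}"

text \<open>Extreme point of a set of functions into a real vector space (pointwise linear
  structure); this is the library notion \<open>extreme_point_of\<close> (not in an open segment between
  two points of the set) written out for the function space.\<close>
definition extreme_point_fun :: "('a \<Rightarrow> 'b::real_vector) \<Rightarrow> ('a \<Rightarrow> 'b) set \<Rightarrow> bool" where
  "extreme_point_fun x S \<longleftrightarrow>
     x \<in> S \<and> (\<forall>a\<in>S. \<forall>b\<in>S. a \<noteq> b \<longrightarrow>
        \<not> (\<exists>u::real. 0 < u \<and> u < 1 \<and> x = (\<lambda>n. (1 - u) *\<^sub>R a n + u *\<^sub>R b n)))"

definition hom_Z_S :: "(int \<Rightarrow> quat) \<Rightarrow> bool" where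
  "hom_Z_S \<phi> \<longleftrightarrow> (\<forall>n. \<phi> n \<in> unit_quats) \<and> (\<forall>m n. \<phi> (m + n) = \<phi> m * \<phi> n)"

end

theory Submission
  imports Defs
begin

text \<open>
  Positive definiteness of \<open>\<phi>\<close> bounds \<open>|\<phi>(n)| \<le> \<phi>(0)\<close>, so a character \<open>\<phi> : \<int> \<rightarrow> \<bbbS>\<close> takes values on
  the unit sphere and is extreme by strict convexity of the unit ball of \<open>\<bbbH>\<close>.

  Conversely, for real \<open>e\<close> the function \<open>(1 + e\<^sup>2) \<phi>(n) + e (\<phi>(n+1) + \<phi>(n-1))\<close> is again positive
  definite. Taking \<open>e = \<plusminus>1\<close> writes an extreme \<open>\<phi>\<close> as a sum of two positive definite functions, each of
  which must then be a multiple of \<open>\<phi>\<close>; this gives \<open>\<phi>(n+1) + \<phi>(n-1) = 2 Re \<phi>(1) \<phi>(n)\<close>. The solution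
  with \<open>\<phi>(0) = 1\<close> lies in the subalgebra \<open>\<real>[u] \<cong> \<complex>\<close> containing \<open>\<phi>(1)\<close> and is a convex combination
  of two characters \<open>\<int> \<rightarrow> \<bbbS>\<close>; extremality leaves only one of them.
\<close>

lemma quat_eq_iff: "x = y \<longleftrightarrow> qre x = qre y \<and> qi x = qi y \<and> qj x = qj y \<and> qk x = qk y"
  by (auto intro: quat_eqI)

lemma quat_components [simp]:
  "qre 0 = 0" "qi 0 = 0" "qj 0 = 0" "qk 0 = 0"
  "qre 1 = 1" "qi 1 = 0" "qj 1 = 0" "qk 1 = 0"
  "qre (x + y) = qre x + qre y" "qi (x + y) = qi x + qi y" "qj (x + y) = qj x + qj y" "qk (x + y) = qk x + qk y"
  "qre (x - y) = qre x - qre y" "qi (x - y) = qi x - qi y" "qj (x - y) = qj x - qj y" "qk (x - y) = qk x - qk y"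
  "qre (- x) = - qre x" "qi (- x) = - qi x" "qj (- x) = - qj x" "qk (- x) = - qk x"
  "qre (r *\<^sub>R x) = r * qre x" "qi (r *\<^sub>R x) = r * qi x" "qj (r *\<^sub>R x) = r * qj x" "qk (r *\<^sub>R x) = r * qk x"
  "qre (x * y) = qre x * qre y - qi x * qi y - qj x * qj y - qk x * qk y"
  "qi (x * y) = qre x * qi y + qi x * qre y + qj x * qk y - qk x * qj y"
  "qj (x * y) = qre x * qj y - qi x * qk y + qj x * qre y + qk x * qi y"
  "qk (x * y) = qre x * qk y + qi x * qj y - qj x * qi y + qk x * qre y"
  "qre (qcnj x) = qre x" "qi (qcnj x) = - qi x" "qj (qcnj x) = - qj x" "qk (qcnj x) = - qk x"
  "qre (quat_of_real r) = r" "qi (quat_of_real r) = 0" "qj (quat_of_real r) = 0" "qk (quat_of_real r) = 0"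
  by (simp_all add: zero_quat_def one_quat_def plus_quat_def minus_quat_def uminus_quat_def
      scaleR_quat_def times_quat_def qcnj_def quat_of_real_def)

instance quat :: real_algebra
  by standard (simp_all add: quat_eq_iff algebra_simps)

lemma quat_sum_components:
  "qre (sum f A) = (\<Sum>a\<in>A. qre (f a))" "qi (sum f A) = (\<Sum>a\<in>A. qi (f a))"
  "qj (sum f A) = (\<Sum>a\<in>A. qj (f a))" "qk (sum f A) = (\<Sum>a\<in>A. qk (f a))"
  by (induction A rule: infinite_finite_induct) auto

lemma qcnj_mult: "qcnj (x * y) = qcnj y * qcnj x"
  by (simp add: quat_eq_iff algebra_simps)

lemma qcnj_sum: "qcnj (sum f A) = (\<Sum>a\<in>A. qcnj (f a))"
  by (simp add: quat_eq_iff quat_sum_components sum_negf)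

lemma mult_quat_of_real: "x * quat_of_real r = r *\<^sub>R x"
  by (simp add: quat_eq_iff)

lemma add_qcnj: "x + qcnj x = quat_of_real (2 * qre x)"
  by (simp add: quat_eq_iff)

definition qnorm2 :: "quat \<Rightarrow> real" where
  "qnorm2 x = (qre x)\<^sup>2 + (qi x)\<^sup>2 + (qj x)\<^sup>2 + (qk x)\<^sup>2"

lemma qnorm2_nonneg: "0 \<le> qnorm2 x"
  by (simp add: qnorm2_def)

lemma qnorm2_le_0_iff: "qnorm2 x \<le> 0 \<longleftrightarrow> x = 0"
proof
  assume "qnorm2 x \<le> 0"
  then have "(qre x)\<^sup>2 = 0 \<and> (qi x)\<^sup>2 = 0 \<and> (qj x)\<^sup>2 = 0 \<and> (qk x)\<^sup>2 = 0"
    using zero_le_power2[of "qre x"] zero_le_power2[of "qi x"] zero_le_power2[of "qj x"]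
      zero_le_power2[of "qk x"] unfolding qnorm2_def by linarith
  then show "x = 0" by (simp add: quat_eq_iff)
qed (simp add: qnorm2_def)

lemma qnorm2_scaleR: "qnorm2 (r *\<^sub>R x) = r\<^sup>2 * qnorm2 x"
  by (simp add: qnorm2_def algebra_simps)

lemma qnorm2_qcnj: "qnorm2 (qcnj x) = qnorm2 x"
  and qnorm2_uminus: "qnorm2 (- x) = qnorm2 x"
  by (simp_all add: qnorm2_def)

lemma qcnj_mult_self: "qcnj x * x = quat_of_real (qnorm2 x)"
  by (simp add: quat_eq_iff qnorm2_def power2_eq_square algebra_simps)

lemma unit_quats_iff: "x \<in> unit_quats \<longleftrightarrow> qnorm2 x = 1"
  by (simp add: unit_quats_def qnorm_def qnorm2_def)

text \<open>The parallelogram law, in the form that makes \<open>qnorm2\<close> strictly convex.\<close>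
lemma qnorm2_convex_combination:
  "qnorm2 ((1 - u) *\<^sub>R a + u *\<^sub>R b) = (1 - u) * qnorm2 a + u * qnorm2 b - u * (1 - u) * qnorm2 (a - b)"
  by (simp add: qnorm2_def power2_eq_square algebra_simps)

lemma qnorm2_unit_convex_combination_eq:
  assumes "qnorm2 a \<le> 1" "qnorm2 b \<le> 1" "0 < u" "u < 1"
    and "qnorm2 ((1 - u) *\<^sub>R a + u *\<^sub>R b) = 1"
  shows "a = b"
proof -
  have "(1 - u) * qnorm2 a \<le> 1 - u" "u * qnorm2 b \<le> u"
    using assms(1-4) mult_left_mono[of _ 1] by simp_all
  then have "(1 - u) * qnorm2 a + u * qnorm2 b \<le> 1" by linarith
  then have "u * (1 - u) * qnorm2 (a - b) \<le> 0"
    using assms(5) qnorm2_convex_combination[of u a b] by linarith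
  then have "qnorm2 (a - b) \<le> 0"
    using assms(3,4) by (simp add: mult_le_0_iff)
  then show ?thesis by (simp add: qnorm2_le_0_iff)
qed

lemma quat_square_eq_minus_one_iff: "u * u = -1 \<longleftrightarrow> qre u = 0 \<and> qnorm2 u = 1"
proof
  assume sq: "u * u = -1"
  have "qre u * qi u = 0" "qre u * qj u = 0" "qre u * qk u = 0"
    and re: "(qre u)\<^sup>2 - (qi u)\<^sup>2 - (qj u)\<^sup>2 - (qk u)\<^sup>2 = -1"
    using sq by (simp_all add: quat_eq_iff power2_eq_square algebra_simps)
  moreover have "qre u = 0"
  proof (rule ccontr)
    assume "qre u \<noteq> 0"
    with calculation have "(qre u)\<^sup>2 = -1" by simp
    then show False using zero_le_power2[of "qre u"] by linarith
  qed
  ultimately show "qre u = 0 \<and> qnorm2 u = 1" by (simp add: qnorm2_def)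
next
  assume "qre u = 0 \<and> qnorm2 u = 1"
  then have "qre u = 0" "(qi u)\<^sup>2 + (qj u)\<^sup>2 + (qk u)\<^sup>2 = 1"
    unfolding qnorm2_def by auto
  then show "u * u = -1"
    by (simp add: quat_eq_iff power2_eq_square algebra_simps)
qed


section \<open>Positive definite functions on \<open>\<int>\<close>\<close>

lemma pos_def_Z_finite_family:
  assumes "pos_def_Z \<psi>" "finite I"
  shows "\<exists>r\<ge>0. (\<Sum>i\<in>I. \<Sum>j\<in>I. qcnj (q i) * \<psi> (g j - g i) * q j) = quat_of_real r"
proof -
  obtain h where h: "bij_betw h {1..card I} I"
    using ex_bij_betw_nat_finite_1[OF assms(2)] by blast
  obtain r where "r \<ge> 0" and r: "(\<Sum>i\<in>{1..card I}. \<Sum>j\<in>{1..card I}.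
      qcnj (q (h i)) * \<psi> (g (h j) - g (h i)) * q (h j)) = quat_of_real r"
    using assms(1) unfolding pos_def_Z_def
    by (elim allE[of _ "card I"] allE[of _ "g \<circ> h"] allE[of _ "q \<circ> h"]) auto
  moreover have "(\<Sum>i\<in>I. \<Sum>j\<in>I. qcnj (q i) * \<psi> (g j - g i) * q j) =
      (\<Sum>i\<in>{1..card I}. \<Sum>j\<in>{1..card I}. qcnj (q (h i)) * \<psi> (g (h j) - g (h i)) * q (h j))"
    by (simp add: sum.reindex_bij_betw[OF h, symmetric])
  ultimately show ?thesis by auto
qed

lemma pos_def_Z_two_points:
  assumes "pos_def_Z \<psi>"
  shows "\<exists>r\<ge>0. qcnj a * \<psi> 0 * a + qcnj a * \<psi> n * b + qcnj b * \<psi> (- n) * a + qcnj b * \<psi> 0 * b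
    = quat_of_real r"
  using pos_def_Z_finite_family[OF assms, of UNIV "\<lambda>x. if x then b else a" "\<lambda>x. if x then n else 0"]
  by (simp add: UNIV_bool algebra_simps)

lemma pos_def_Z_at_zero:
  assumes "pos_def_Z \<psi>"
  shows "\<psi> 0 = quat_of_real (qre (\<psi> 0))" "0 \<le> qre (\<psi> 0)"
  using pos_def_Z_two_points[OF assms, of 1 0 0] by (auto simp: quat_eq_iff)

lemma pos_def_Z_uminus:
  assumes "pos_def_Z \<psi>"
  shows "\<psi> (- n) = qcnj (\<psi> n)"
proof -
  define i where "i = Quat 0 1 0 0"
  have [simp]: "qre i = 0" "qi i = 1" "qj i = 0" "qk i = 0" by (simp_all add: i_def)
  obtain r1 where "qcnj 1 * \<psi> 0 * 1 + qcnj 1 * \<psi> n * 1 + qcnj 1 * \<psi> (- n) * 1 + qcnj 1 * \<psi> 0 * 1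
      = quat_of_real r1"
    using pos_def_Z_two_points[OF assms] by blast
  moreover obtain r2 where "qcnj 1 * \<psi> 0 * 1 + qcnj 1 * \<psi> n * i + qcnj i * \<psi> (- n) * 1 + qcnj i * \<psi> 0 * i
      = quat_of_real r2"
    using pos_def_Z_two_points[OF assms] by blast
  ultimately show ?thesis
    using pos_def_Z_at_zero(1)[OF assms] by (simp add: quat_eq_iff)
qed

lemma pos_def_Z_quadratic:
  assumes "pos_def_Z \<psi>"
  shows "0 \<le> qre (\<psi> 0) * (1 + qnorm2 x) + 2 * qre (\<psi> n * x)"
proof -
  obtain r where "r \<ge> 0" and r: "qcnj 1 * \<psi> 0 * 1 + qcnj 1 * \<psi> n * x + qcnj x * \<psi> (- n) * 1
      + qcnj x * \<psi> 0 * x = quat_of_real r"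
    using pos_def_Z_two_points[OF assms] by blast
  have "r = qre (\<psi> 0) * (1 + qnorm2 x) + 2 * qre (\<psi> n * x)"
    using arg_cong[OF r, of qre] pos_def_Z_at_zero(1)[OF assms]
    by (simp add: pos_def_Z_uminus[OF assms] qnorm2_def power2_eq_square algebra_simps)
  with \<open>r \<ge> 0\<close> show ?thesis by simp
qed

lemma pos_def_Z_qnorm2_le:
  assumes "pos_def_Z \<psi>"
  shows "qnorm2 (\<psi> n) \<le> (qre (\<psi> 0))\<^sup>2"
proof -
  define t where "t = qre (\<psi> 0)"
  define N where "N = qnorm2 (\<psi> n)"
  have "t \<ge> 0" using pos_def_Z_at_zero(2)[OF assms] by (simp add: t_def)
  have key: "0 \<le> t * (1 + s\<^sup>2 * N) - 2 * s * N" for s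
  proof -
    have re: "qre (\<psi> n * (- s *\<^sub>R qcnj (\<psi> n))) = - s * N"
      by (simp add: N_def qnorm2_def power2_eq_square algebra_simps)
    have nm: "qnorm2 (- s *\<^sub>R qcnj (\<psi> n)) = s\<^sup>2 * N"
      by (simp add: N_def qnorm2_uminus qnorm2_scaleR qnorm2_qcnj)
    have "0 \<le> t * (1 + qnorm2 (- s *\<^sub>R qcnj (\<psi> n))) + 2 * qre (\<psi> n * (- s *\<^sub>R qcnj (\<psi> n)))"
      unfolding t_def by (rule pos_def_Z_quadratic[OF assms])
    then show ?thesis unfolding re nm by (simp add: algebra_simps)
  qed
  show ?thesis
  proof (cases "t = 0")
    case True
    then show ?thesis using key[of 1] by (simp add: t_def N_def)
  next
    case False
    with \<open>t \<ge> 0\<close> have "t > 0" by simp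
    have "0 \<le> t * (t * (1 + (1 / t)\<^sup>2 * N) - 2 * (1 / t) * N)"
      using key[of "1 / t"] \<open>t > 0\<close> by simp
    also have "\<dots> = t\<^sup>2 - N"
      using \<open>t > 0\<close> by (simp add: field_simps power2_eq_square)
    finally show ?thesis by (simp add: t_def N_def)
  qed
qed

lemma PH_Z_qnorm2_le_1: "\<psi> \<in> PH_Z \<Longrightarrow> qnorm2 (\<psi> n) \<le> 1"
  using pos_def_Z_qnorm2_le[of \<psi> n] by (simp add: PH_Z_def)

lemma pos_def_Z_eq_0:
  assumes "pos_def_Z \<psi>" "\<psi> 0 = 0"
  shows "\<psi> n = 0"
  using pos_def_Z_qnorm2_le[OF assms(1), of n] assms(2) by (simp add: qnorm2_le_0_iff)

lemma pos_def_Z_scaleR: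
  assumes "pos_def_Z \<psi>" "0 \<le> c"
  shows "pos_def_Z (\<lambda>n. c *\<^sub>R \<psi> n)"
  unfolding pos_def_Z_def
proof (intro allI)
  fix k :: nat and g :: "nat \<Rightarrow> int" and q :: "nat \<Rightarrow> quat"
  obtain r where "r \<ge> 0" "(\<Sum>i\<in>{1..k}. \<Sum>j\<in>{1..k}. qcnj (q i) * \<psi> (g j - g i) * q j) = quat_of_real r"
    using pos_def_Z_finite_family[OF assms(1)] by blast
  then show "\<exists>r\<ge>0. (\<Sum>i\<in>{1..k}. \<Sum>j\<in>{1..k}. qcnj (q i) * (c *\<^sub>R \<psi> (g j - g i)) * q j)
      = quat_of_real r"
    using assms(2)
    by (intro exI[of _ "c * r"]) (simp add: scaleR_sum_right[symmetric] quat_eq_iff)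
qed

text \<open>Averaging against the two-point weight \<open>\<delta>\<^sub>0 + e \<delta>\<^sub>1\<close>: the Gram sum of the new function at
  the points \<open>g\<^sub>i\<close> is the Gram sum of \<open>\<phi>\<close> at the points \<open>g\<^sub>i, g\<^sub>i + 1\<close> with coefficients \<open>q\<^sub>i, e q\<^sub>i\<close>.\<close>
lemma pos_def_Z_neighbour_sum:
  assumes "pos_def_Z \<phi>"
  shows "pos_def_Z (\<lambda>n. (1 + e\<^sup>2) *\<^sub>R \<phi> n + e *\<^sub>R (\<phi> (n + 1) + \<phi> (n - 1)))"
  unfolding pos_def_Z_def
proof (intro allI)
  fix k :: nat and g :: "nat \<Rightarrow> int" and q :: "nat \<Rightarrow> quat"
  define G where "G = (\<lambda>(i, b). g i + (if b then 1 else 0))"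
  define Q where "Q = (\<lambda>(i, b). if b then e *\<^sub>R q i else q i)"
  define F where "F = (\<lambda>x y. qcnj (Q x) * \<phi> (G y - G x) * Q y)"
  have "finite ({1..k} \<times> (UNIV :: bool set))" by simp
  then obtain r where "r \<ge> 0" and r: "(\<Sum>x\<in>{1..k} \<times> UNIV. \<Sum>y\<in>{1..k} \<times> UNIV. F x y) = quat_of_real r"
    using pos_def_Z_finite_family[OF assms] unfolding F_def by blast
  have shifts: "g j + 1 - g i = g j - g i + 1" "g j - (g i + 1) = g j - g i - 1"
    "g j + 1 - (g i + 1) = g j - g i" for i j
    by simp_all
  have qcnj_scaleR: "qcnj (e *\<^sub>R x) = e *\<^sub>R qcnj x" for x
    by (simp add: quat_eq_iff)
  have "(\<Sum>i\<in>{1..k}. \<Sum>j\<in>{1..k}.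
      qcnj (q i) * ((1 + e\<^sup>2) *\<^sub>R \<phi> (g j - g i) + e *\<^sub>R (\<phi> (g j - g i + 1) + \<phi> (g j - g i - 1))) * q j)
    = (\<Sum>i\<in>{1..k}. \<Sum>j\<in>{1..k}.
      F (i, False) (j, False) + F (i, False) (j, True) + (F (i, True) (j, False) + F (i, True) (j, True)))"
    by (intro sum.cong refl)
      (simp add: F_def G_def Q_def shifts qcnj_scaleR power2_eq_square distrib_left distrib_right
        scaleR_add_right scaleR_add_left)
  also have "\<dots> = (\<Sum>x\<in>{1..k} \<times> UNIV. \<Sum>y\<in>{1..k} \<times> UNIV. F x y)"
    by (simp add: sum.cartesian_product' UNIV_bool sum.distrib add_ac)
  finally show "\<exists>r\<ge>0. (\<Sum>i\<in>{1..k}. \<Sum>j\<in>{1..k}. qcnj (q i) *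
      ((1 + e\<^sup>2) *\<^sub>R \<phi> (g j - g i) + e *\<^sub>R (\<phi> (g j - g i + 1) + \<phi> (g j - g i - 1))) * q j)
      = quat_of_real r"
    using r \<open>r \<ge> 0\<close> by auto
qed

section \<open>Characters \<open>\<int> \<rightarrow> \<bbbS>\<close>\<close>

lemma unit_quats_qcnj_mult: "x \<in> unit_quats \<Longrightarrow> qcnj x * x = 1"
  by (simp add: unit_quats_iff qcnj_mult_self quat_eq_iff)

lemma hom_Z_S_zero:
  assumes "hom_Z_S \<phi>"
  shows "\<phi> 0 = 1"
proof -
  have unit: "qcnj (\<phi> 0) * \<phi> 0 = 1"
    using assms by (simp add: hom_Z_S_def unit_quats_qcnj_mult)
  have "\<phi> 0 = \<phi> 0 * \<phi> 0"
    using assms unfolding hom_Z_S_def by (metis add_0)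
  then have "qcnj (\<phi> 0) * \<phi> 0 = qcnj (\<phi> 0) * \<phi> 0 * \<phi> 0"
    by (simp add: mult.assoc)
  then show ?thesis unfolding unit by simp
qed

lemma hom_Z_S_uminus:
  assumes "hom_Z_S \<phi>"
  shows "\<phi> (- n) = qcnj (\<phi> n)"
proof -
  have "\<phi> n * \<phi> (- n) = 1"
    using assms hom_Z_S_zero[OF assms] by (metis hom_Z_S_def add.right_inverse)
  then have "qcnj (\<phi> n) * \<phi> n * \<phi> (- n) = qcnj (\<phi> n)"
    by (simp add: mult.assoc)
  then show ?thesis
    using assms by (simp add: hom_Z_S_def unit_quats_qcnj_mult)
qed

text \<open>The Gram sum of a unitary character is \<open>qcnj v * v\<close> for \<open>v = \<Sum>\<^sub>j \<phi>(g\<^sub>j) q\<^sub>j\<close>.\<close>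
lemma hom_Z_S_in_PH_Z:
  assumes "hom_Z_S \<phi>"
  shows "\<phi> \<in> PH_Z"
proof -
  have diff: "\<phi> (y - x) = qcnj (\<phi> x) * \<phi> y" for x y
    using assms hom_Z_S_uminus[OF assms, of x] by (metis hom_Z_S_def uminus_add_conv_diff)
  have "pos_def_Z \<phi>"
    unfolding pos_def_Z_def
  proof (intro allI)
    fix k :: nat and g :: "nat \<Rightarrow> int" and q :: "nat \<Rightarrow> quat"
    define v where "v = (\<Sum>j\<in>{1..k}. \<phi> (g j) * q j)"
    have "(\<Sum>i\<in>{1..k}. \<Sum>j\<in>{1..k}. qcnj (q i) * \<phi> (g j - g i) * q j) = qcnj v * v"
      unfolding v_def qcnj_sum qcnj_mult sum_product diff by (simp add: mult.assoc)
    then show "\<exists>r\<ge>0. (\<Sum>i\<in>{1..k}. \<Sum>j\<in>{1..k}. qcnj (q i) * \<phi> (g j - g i) * q j) = quat_of_real r"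
      by (intro exI[of _ "qnorm2 v"]) (simp add: qcnj_mult_self qnorm2_nonneg)
  qed
  then show ?thesis using hom_Z_S_zero[OF assms] by (simp add: PH_Z_def)
qed

lemma hom_Z_S_recurrence:
  assumes "hom_Z_S \<phi>"
  shows "\<phi> (n + 1) + \<phi> (n - 1) = (2 * qre (\<phi> 1)) *\<^sub>R \<phi> n"
proof -
  have "\<phi> (n + 1) = \<phi> n * \<phi> 1" using assms by (simp add: hom_Z_S_def)
  moreover have "\<phi> (n - 1) = \<phi> n * \<phi> (- 1)"
    using assms unfolding hom_Z_S_def by (metis diff_conv_add_uminus)
  ultimately have "\<phi> (n + 1) + \<phi> (n - 1) = \<phi> n * (\<phi> 1 + \<phi> (- 1))"
    by (simp add: distrib_left)
  also have "\<dots> = \<phi> n * quat_of_real (2 * qre (\<phi> 1))"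
    by (simp add: hom_Z_S_uminus[OF assms] add_qcnj)
  finally show ?thesis by (simp add: mult_quat_of_real)
qed

lemma hom_Z_S_extreme_point:
  assumes "hom_Z_S \<phi>"
  shows "extreme_point_fun \<phi> PH_Z"
  unfolding extreme_point_fun_def
proof (intro conjI ballI impI notI)
  show "\<phi> \<in> PH_Z" using hom_Z_S_in_PH_Z[OF assms] .
  fix a b assume a: "a \<in> PH_Z" and b: "b \<in> PH_Z" and "a \<noteq> b"
    and "\<exists>u. 0 < u \<and> u < 1 \<and> \<phi> = (\<lambda>n. (1 - u) *\<^sub>R a n + u *\<^sub>R b n)"
  then obtain u where u: "0 < u" "u < 1" and \<phi>: "\<phi> = (\<lambda>n. (1 - u) *\<^sub>R a n + u *\<^sub>R b n)"
    by auto
  obtain n where "a n \<noteq> b n" using \<open>a \<noteq> b\<close> by auto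
  moreover have "qnorm2 ((1 - u) *\<^sub>R a n + u *\<^sub>R b n) = 1"
    using assms \<phi> by (auto simp: hom_Z_S_def unit_quats_iff)
  ultimately show False
    using qnorm2_unit_convex_combination_eq[OF PH_Z_qnorm2_le_1[OF a] PH_Z_qnorm2_le_1[OF b] u] by blast
qed

section \<open>Extreme points satisfy a three-term recurrence\<close>

lemma pos_def_Z_normalize:
  assumes "pos_def_Z \<psi>" "0 < qre (\<psi> 0)"
  shows "(\<lambda>n. (1 / qre (\<psi> 0)) *\<^sub>R \<psi> n) \<in> PH_Z"
  using pos_def_Z_scaleR[OF assms(1), of "1 / qre (\<psi> 0)"] pos_def_Z_at_zero(1)[OF assms(1)] assms(2)
  by (simp add: PH_Z_def quat_eq_iff)

text \<open>An extreme point of \<open>PH_Z\<close> spans an extreme ray of the cone of positive definite functions.\<close>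
lemma extreme_PH_Z_split:
  assumes ext: "extreme_point_fun \<phi> PH_Z" and P: "pos_def_Z P" and M: "pos_def_Z M"
    and sum: "\<And>n. \<phi> n = P n + M n"
  shows "P n = qre (P 0) *\<^sub>R \<phi> n"
proof -
  define p where "p = qre (P 0)"
  define m where "m = qre (M 0)"
  have "\<phi> 0 = 1" using ext by (simp add: extreme_point_fun_def PH_Z_def)
  then have "p + m = 1" using sum[of 0] by (simp add: p_def m_def quat_eq_iff)
  moreover have "0 \<le> p" "0 \<le> m"
    using pos_def_Z_at_zero(2) P M by (simp_all add: p_def m_def)
  ultimately consider "p = 0" | "m = 0" | "0 < p" "0 < m" by linarith
  then show ?thesis
  proof cases
    case 1
    then have "P 0 = 0" using pos_def_Z_at_zero(1)[OF P] by (simp add: p_def quat_eq_iff)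
    then show ?thesis using pos_def_Z_eq_0[OF P] 1 by (simp add: p_def)
  next
    case 2
    then have "M 0 = 0" using pos_def_Z_at_zero(1)[OF M] by (simp add: m_def quat_eq_iff)
    then show ?thesis using pos_def_Z_eq_0[OF M] sum \<open>p + m = 1\<close> 2 by (simp add: p_def)
  next
    case 3
    define a where "a = (\<lambda>n. (1 / m) *\<^sub>R M n)"
    define b where "b = (\<lambda>n. (1 / p) *\<^sub>R P n)"
    have "a \<in> PH_Z" "b \<in> PH_Z"
      using pos_def_Z_normalize M P 3 by (simp_all add: a_def b_def m_def p_def)
    moreover have "1 - p = m" using \<open>p + m = 1\<close> by simp
    then have \<phi>: "\<phi> = (\<lambda>n. (1 - p) *\<^sub>R a n + p *\<^sub>R b n)"
      using sum 3 by (auto simp: a_def b_def add.commute)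
    ultimately have "a = b"
      using ext 3 \<open>1 - p = m\<close> unfolding extreme_point_fun_def by force
    then have "\<phi> = b" by (simp add: \<phi> algebra_simps)
    then show ?thesis using 3 by (simp add: b_def p_def)
  qed
qed

text \<open>Splitting \<open>4\<phi>\<close> as \<open>(2\<phi>(n) + \<phi>(n+1) + \<phi>(n-1)) + (2\<phi>(n) - \<phi>(n+1) - \<phi>(n-1))\<close> with
  positive definite summands.\<close>
lemma extreme_PH_Z_recurrence:
  assumes ext: "extreme_point_fun \<phi> PH_Z"
  shows "\<phi> (n + 1) + \<phi> (n - 1) = (2 * qre (\<phi> 1)) *\<^sub>R \<phi> n"
proof -
  have pd: "pos_def_Z \<phi>" and "\<phi> 0 = 1"
    using ext by (simp_all add: extreme_point_fun_def PH_Z_def)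
  define S where "S = (\<lambda>e n. (1 / 4) *\<^sub>R ((1 + e\<^sup>2) *\<^sub>R \<phi> n + e *\<^sub>R (\<phi> (n + 1) + \<phi> (n - 1))))"
  have pd_S: "pos_def_Z (S e)" for e :: real
    unfolding S_def by (rule pos_def_Z_scaleR[OF pos_def_Z_neighbour_sum[OF pd]]) simp
  have "\<phi> n = S 1 n + S (- 1) n" for n
    by (simp add: S_def quat_eq_iff algebra_simps)
  then have "S 1 n = qre (S 1 0) *\<^sub>R \<phi> n"
    by (rule extreme_PH_Z_split[OF ext pd_S pd_S])
  moreover have "qre (\<phi> 0) = 1" "qre (\<phi> (- 1)) = qre (\<phi> 1)"
    using \<open>\<phi> 0 = 1\<close> by (simp_all add: pos_def_Z_uminus[OF pd])
  ultimately show ?thesis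
    by (simp add: S_def quat_eq_iff field_simps)
qed

section \<open>Solutions of the recurrence\<close>

lemma int_recurrence_unique:
  fixes f g :: "int \<Rightarrow> 'a::real_vector"
  assumes f: "\<And>n. f (n + 1) + f (n - 1) = r *\<^sub>R f n"
    and g: "\<And>n. g (n + 1) + g (n - 1) = r *\<^sub>R g n"
    and "f 0 = g 0" "f 1 = g 1"
  shows "f n = g n"
proof -
  have "f n = g n \<and> f (n + 1) = g (n + 1)"
  proof (induction n rule: int_induct[where k = 0])
    case base
    then show ?case using assms(3,4) by simp
  next
    case (step1 i)
    have "f (i + 1 + 1) = r *\<^sub>R f (i + 1) - f i" "g (i + 1 + 1) = r *\<^sub>R g (i + 1) - g i"
      using f[of "i + 1"] g[of "i + 1"] by (simp_all add: eq_diff_eq)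
    with step1 show ?case by simp
  next
    case (step2 i)
    have "f (i - 1) = r *\<^sub>R f i - f (i + 1)" "g (i - 1) = r *\<^sub>R g i - g (i + 1)"
      using f[of i] g[of i] by (simp_all add: eq_diff_eq add.commute)
    with step2 show ?case by simp
  qed
  then show ?thesis ..
qed

text \<open>For \<open>u * u = -1\<close> this embeds \<open>\<complex>\<close> as the subalgebra \<open>\<real>[u]\<close> of \<open>\<bbbH>\<close>.\<close>
definition quat_of_complex :: "quat \<Rightarrow> complex \<Rightarrow> quat" where
  "quat_of_complex u z = quat_of_real (Re z) + Im z *\<^sub>R u"

lemma quat_of_complex_one: "quat_of_complex u 1 = 1"
  by (simp add: quat_of_complex_def quat_eq_iff)

lemma quat_of_complex_mult:
  assumes "u * u = -1"
  shows "quat_of_complex u (a * b) = quat_of_complex u a * quat_of_complex u b"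
proof -
  have "quat_of_complex u a * quat_of_complex u b = quat_of_real (Re a * Re b)
      + (Re a * Im b + Im a * Re b) *\<^sub>R u + (Im a * Im b) *\<^sub>R (u * u)"
    by (simp add: quat_of_complex_def quat_eq_iff algebra_simps)
  then show ?thesis
    by (simp add: assms quat_of_complex_def quat_eq_iff algebra_simps)
qed

lemma qnorm2_quat_of_complex:
  assumes "u * u = -1"
  shows "qnorm2 (quat_of_complex u z) = (cmod z)\<^sup>2"
proof -
  have "qre u = 0" "qnorm2 u = 1"
    using assms quat_square_eq_minus_one_iff by auto
  then have "(qi u)\<^sup>2 + (qj u)\<^sup>2 + (qk u)\<^sup>2 = 1" by (simp add: qnorm2_def)
  moreover have "qnorm2 (quat_of_complex u z) = (Re z)\<^sup>2 + (Im z)\<^sup>2 * ((qi u)\<^sup>2 + (qj u)\<^sup>2 + (qk u)\<^sup>2)"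
    using \<open>qre u = 0\<close> by (simp add: quat_of_complex_def qnorm2_def algebra_simps)
  ultimately show ?thesis by (simp add: cmod_power2)
qed

lemma hom_Z_S_quat_of_complex_power_int:
  assumes "u * u = -1" "cmod z = 1"
  shows "hom_Z_S (\<lambda>n. quat_of_complex u (z powi n))"
proof -
  have "z \<noteq> 0" using assms(2) by auto
  then show ?thesis
    using assms unfolding hom_Z_S_def
    by (simp add: unit_quats_iff qnorm2_quat_of_complex norm_power_int power_int_add
        quat_of_complex_mult)
qed

lemma quat_complex_slice:
  obtains u w where "u * u = -1" "0 \<le> w" "x = quat_of_complex u (Complex (qre x) w)"
proof -
  define v where "v = x - quat_of_real (qre x)"
  define w where "w = sqrt (qnorm2 v)"
  have x: "x = quat_of_real (qre x) + v" by (simp add: v_def)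
  show thesis
  proof (cases "w = 0")
    case True
    then have "v = 0" by (simp add: w_def flip: qnorm2_le_0_iff)
    moreover have "Quat 0 1 0 0 * Quat 0 1 0 0 = -1" by (simp add: quat_eq_iff)
    ultimately show thesis using that[of "Quat 0 1 0 0" 0] x by (simp add: quat_of_complex_def)
  next
    case False
    moreover have "w \<ge> 0" by (simp add: w_def qnorm2_nonneg)
    ultimately have "w > 0" by simp
    define u where "u = (1 / w) *\<^sub>R v"
    have "qnorm2 u = qnorm2 v / w\<^sup>2" by (simp add: u_def qnorm2_scaleR power_divide)
    also have "\<dots> = 1" using False by (simp add: w_def qnorm2_nonneg)
    finally have "qnorm2 u = 1" .
    moreover have "qre u = 0" by (simp add: u_def v_def)
    ultimately have "u * u = -1" using quat_square_eq_minus_one_iff by blast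
    moreover have "v = w *\<^sub>R u" using \<open>w > 0\<close> by (simp add: u_def)
    ultimately show thesis using that[of u w] x \<open>w > 0\<close> by (simp add: quat_of_complex_def)
  qed
qed

lemma quat_of_complex_power_int_recurrence:
  assumes "u * u = -1" "cmod z = 1"
  shows "quat_of_complex u (z powi (n + 1)) + quat_of_complex u (z powi (n - 1))
    = (2 * Re z) *\<^sub>R quat_of_complex u (z powi n)"
  using hom_Z_S_recurrence[OF hom_Z_S_quat_of_complex_power_int[OF assms]] assms(1)
  by (simp add: quat_of_complex_def quat_square_eq_minus_one_iff)

text \<open>With \<open>\<zeta> = c + i w\<close> take \<open>z = c + i \<surd>(1 - c\<^sup>2)\<close>; the weight is fixed by \<open>(2\<alpha> - 1) \<surd>(1 - c\<^sup>2) = w\<close>.\<close>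
lemma unit_disc_conj_combination:
  assumes "cmod \<zeta> \<le> 1" "0 \<le> Im \<zeta>"
  obtains z \<alpha> where "cmod z = 1" "0 < \<alpha>" "\<alpha> \<le> 1" "\<alpha> < 1 \<Longrightarrow> Im z \<noteq> 0"
    "\<zeta> = \<alpha> *\<^sub>R z + (1 - \<alpha>) *\<^sub>R cnj z"
proof -
  define c where "c = Re \<zeta>"
  define w where "w = Im \<zeta>"
  have "c\<^sup>2 + w\<^sup>2 \<le> 1"
    using assms(1) power_mono[OF _ norm_ge_zero, of \<zeta> 1 2] by (simp add: c_def w_def cmod_power2)
  define s where "s = sqrt (1 - c\<^sup>2)"
  have "c\<^sup>2 \<le> 1" using \<open>c\<^sup>2 + w\<^sup>2 \<le> 1\<close> zero_le_power2[of w] by linarith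
  then have "c\<^sup>2 + s\<^sup>2 = 1" by (simp add: s_def)
  have "w \<le> s"
    using \<open>c\<^sup>2 + w\<^sup>2 \<le> 1\<close> assms(2) by (simp add: s_def w_def real_le_rsqrt)
  define z where "z = Complex c s"
  define \<alpha> where "\<alpha> = (if s = 0 then 1 else (1 + w / s) / 2)"
  have "0 < \<alpha>" "\<alpha> \<le> 1" "(2 * \<alpha> - 1) * s = w"
    using assms(2) \<open>w \<le> s\<close> by (auto simp: \<alpha>_def w_def field_simps)
  moreover have "cmod z = 1"
    using \<open>c\<^sup>2 + s\<^sup>2 = 1\<close> by (simp add: z_def cmod_def)
  moreover have "\<alpha> < 1 \<Longrightarrow> Im z \<noteq> 0" by (auto simp: \<alpha>_def z_def)
  moreover have "\<zeta> = \<alpha> *\<^sub>R z + (1 - \<alpha>) *\<^sub>R cnj z"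
    using \<open>(2 * \<alpha> - 1) * s = w\<close> by (simp add: complex_eq_iff z_def c_def w_def algebra_simps)
  ultimately show thesis using that by blast
qed

text \<open>The two characters live in the slice of \<open>\<bbbH>\<close> containing \<open>\<phi>(1)\<close>, and their mixture is matched
  with \<open>\<phi>\<close> at \<open>n = 0, 1\<close>.\<close>
lemma recurrence_mixture_of_characters:
  assumes "\<phi> 0 = 1" and rec: "\<And>n. \<phi> (n + 1) + \<phi> (n - 1) = (2 * qre (\<phi> 1)) *\<^sub>R \<phi> n"
    and "qnorm2 (\<phi> 1) \<le> 1"
  obtains u z \<alpha> where "u * u = -1" "cmod z = 1" "0 < \<alpha>" "\<alpha> \<le> 1" "\<alpha> < 1 \<Longrightarrow> Im z \<noteq> 0"
    "\<And>n. \<phi> n = \<alpha> *\<^sub>R quat_of_complex u (z powi n) + (1 - \<alpha>) *\<^sub>R quat_of_complex u (cnj z powi n)"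
proof -
  define c where "c = qre (\<phi> 1)"
  obtain u w where u: "u * u = -1" and "0 \<le> w" and \<phi>1: "\<phi> 1 = quat_of_complex u (Complex c w)"
    using quat_complex_slice unfolding c_def by metis
  have "(cmod (Complex c w))\<^sup>2 \<le> 1"
    using assms(3) by (simp add: \<phi>1 qnorm2_quat_of_complex[OF u])
  then have "cmod (Complex c w) \<le> 1"
    using abs_square_le_1[of "cmod (Complex c w)"] by simp
  then obtain z \<alpha> where z: "cmod z = 1" and \<alpha>: "0 < \<alpha>" "\<alpha> \<le> 1" "\<alpha> < 1 \<Longrightarrow> Im z \<noteq> 0"
    and \<zeta>: "Complex c w = \<alpha> *\<^sub>R z + (1 - \<alpha>) *\<^sub>R cnj z"
    using unit_disc_conj_combination \<open>0 \<le> w\<close> by (metis complex.sel(2))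
  define A where "A \<xi> n = quat_of_complex u (\<xi> powi n)" for \<xi> n
  define F where "F n = \<alpha> *\<^sub>R A z n + (1 - \<alpha>) *\<^sub>R A (cnj z) n" for n
  have "Re z = c" using arg_cong[OF \<zeta>, of Re] by (simp add: algebra_simps)
  have "F (n + 1) + F (n - 1) = (2 * c) *\<^sub>R F n" for n
  proof -
    have "F (n + 1) + F (n - 1)
        = \<alpha> *\<^sub>R (A z (n + 1) + A z (n - 1)) + (1 - \<alpha>) *\<^sub>R (A (cnj z) (n + 1) + A (cnj z) (n - 1))"
      by (simp add: F_def scaleR_add_right)
    also have "\<dots> = \<alpha> *\<^sub>R ((2 * c) *\<^sub>R A z n) + (1 - \<alpha>) *\<^sub>R ((2 * c) *\<^sub>R A (cnj z) n)"
      using quat_of_complex_power_int_recurrence[OF u z, of n]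
        quat_of_complex_power_int_recurrence[OF u, of "cnj z" n] z \<open>Re z = c\<close>
      by (simp add: A_def)
    also have "\<dots> = (2 * c) *\<^sub>R F n"
      by (simp add: F_def scaleR_add_right mult_ac)
    finally show ?thesis .
  qed
  moreover have "F 0 = 1"
    by (simp add: F_def A_def quat_of_complex_one flip: scaleR_add_left)
  moreover have "F 1 = \<phi> 1"
    unfolding \<phi>1 \<zeta> by (simp add: F_def A_def quat_of_complex_def quat_eq_iff algebra_simps)
  ultimately have "\<phi> n = F n" for n
    using int_recurrence_unique[OF rec[folded c_def]] assms(1) by metis
  then show thesis using that[OF u z \<alpha>] by (simp add: F_def A_def)
qed

lemma extreme_PH_Z_hom_Z_S:
  assumes ext: "extreme_point_fun \<phi> PH_Z"
  shows "hom_Z_S \<phi>"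
proof -
  have PH: "\<phi> \<in> PH_Z" using ext by (simp add: extreme_point_fun_def)
  then have "\<phi> 0 = 1" by (simp add: PH_Z_def)
  obtain u z \<alpha> where u: "u * u = -1" and "cmod z = 1" and \<alpha>: "0 < \<alpha>" "\<alpha> \<le> 1"
    and Im: "\<alpha> < 1 \<Longrightarrow> Im z \<noteq> 0"
    and \<phi>: "\<And>n. \<phi> n = \<alpha> *\<^sub>R quat_of_complex u (z powi n) + (1 - \<alpha>) *\<^sub>R quat_of_complex u (cnj z powi n)"
    using recurrence_mixture_of_characters[OF \<open>\<phi> 0 = 1\<close> extreme_PH_Z_recurrence[OF ext]
        PH_Z_qnorm2_le_1[OF PH]] by blast
  define a where "a n = quat_of_complex u (cnj z powi n)" for n
  define b where "b n = quat_of_complex u (z powi n)" for n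
  have hom_b: "hom_Z_S b"
    unfolding b_def by (rule hom_Z_S_quat_of_complex_power_int[OF u \<open>cmod z = 1\<close>])
  show ?thesis
  proof (cases "\<alpha> = 1")
    case True
    then have "\<phi> = b" by (simp add: fun_eq_iff \<phi> b_def)
    then show ?thesis using hom_b by simp
  next
    case False
    with \<alpha> have "0 < \<alpha>" "\<alpha> < 1" by auto
    have "a \<noteq> b"
    proof
      assume "a = b"
      have "(2 * Im z) *\<^sub>R u = b 1 - a 1" by (simp add: a_def b_def quat_of_complex_def quat_eq_iff)
      then have "u = 0" using \<open>a = b\<close> Im \<open>\<alpha> < 1\<close> by simp
      then show False using u by (simp add: quat_eq_iff)
    qed
    moreover have "a \<in> PH_Z"
      unfolding a_def using hom_Z_S_in_PH_Z[OF hom_Z_S_quat_of_complex_power_int[OF u]] \<open>cmod z = 1\<close>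
      by simp
    moreover have "b \<in> PH_Z" using hom_Z_S_in_PH_Z[OF hom_b] .
    moreover have "\<phi> = (\<lambda>n. (1 - \<alpha>) *\<^sub>R a n + \<alpha> *\<^sub>R b n)"
      by (simp add: fun_eq_iff \<phi> a_def b_def add.commute)
    ultimately show ?thesis
      using ext \<open>0 < \<alpha>\<close> \<open>\<alpha> < 1\<close> unfolding extreme_point_fun_def by blast
  qed
qed

theorem mainTheorem8:
  fixes \<phi> :: "int \<Rightarrow> quat"
  shows "extreme_point_fun \<phi> PH_Z \<longleftrightarrow> hom_Z_S \<phi>"
  using extreme_PH_Z_hom_Z_S hom_Z_S_extreme_point by blast

end
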